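(* Let $\{\varphi_n\}$ be a generalized Riesz system in a Hilbert space $\mathcal H$ with constructing pair $(\{e_n\},T)$, and put $\psi^T_n=(T^{-1})^*e_n$, $n\ge0$. Suppose that $\{e_n\}\subset D(T^*T)\cap D(T^{-1}(T^{-1})^* )$. Then $(\{\varphi_n\},\{\psi^T_n\})$ is a $(D(T^* )\cap D(T^{-1}))$-quasi basis, and $T=\big(\overline{T_{e,\psi^T}|_{D(T^* )\cap D(T^{-1})}}\big)^{-1}$, $(T^{-1})^*=\big(\overline{T_{e,\varphi}|_{D(T^* )\cap D(T^{-1})}}\big)^{-1}$.
   Context: A sequence $\{\varphi_n\}$ is a generalized Riesz system if there exist an ONB $\{e_n\}$ and a densely defined closed operator $T$ with densely defined inverse such that $e_n\in D(T)\cap D((T^{-1})^* )$ and $Te_n=\varphi_n$ for all $n$; $(\{e_n\},T)$ is a constructing pair. Inner product linear in the first argument. For a sequence $\{\chi_n\}$, $D(\chi)=\{x:\sum_n|\langle x,\chi_n\rangle|^2<\infty\}$ and $D_\chi$ is its linear span; $T_{e,\chi}$ is the operator with domain $D(\chi)$, $T_{e,\chi}x=\sum_n\langle x,\chi_n\rangle e_n$. For biorthogonal sequences $\{\varphi_n\},\{\psi_n\}$ and a dense subspace $\mathcal D$ with $D_\varphi\cup D_\psi\subseteq\mathcal D\subseteq D(\varphi)\cap D(\psi)$, the pair is a $\mathcal D$-quasi basis if $\sum_k\langle x,\varphi_k\rangle\langle\psi_k,y\rangle=\langle x,y\rangle$ for all $x,y\in\mathcal D$. Bars denote closures, $|$ restrictions.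 *)

theory Defs
  imports "HOL-Analysis.Analysis"
begin

class complex_vector = real_vector +
  fixes scaleC :: "complex \<Rightarrow> 'a \<Rightarrow> 'a"
  assumes scaleC_add_right: "scaleC a (x + y) = scaleC a x + scaleC a y"
    and scaleC_add_left: "scaleC (a + b) x = scaleC a x + scaleC b x"
    and scaleC_scaleC: "scaleC a (scaleC b x) = scaleC (a * b) x"
    and scaleC_one: "scaleC 1 x = x"
    and scaleR_scaleC: "scaleR r x = scaleC (complex_of_real r) x"

text \<open>Inner product, linear in the first argument.\<close>
class complex_inner = complex_vector + real_normed_vector +
  fixes cinner :: "'a \<Rightarrow> 'a \<Rightarrow> complex"
  assumes cinner_commute: "cinner x y = cnj (cinner y x)"
    and cinner_add_left: "cinner (x + y) z = cinner x z + cinner y z"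
    and cinner_scaleC_left: "cinner (scaleC r x) y = r * cinner x y"
    and cinner_ge_zero: "0 \<le> Re (cinner x x)"
    and cinner_eq_zero_iff: "cinner x x = 0 \<longleftrightarrow> x = 0"
    and norm_eq_sqrt_cinner: "norm x = sqrt (Re (cinner x x))"

class chilbert = complex_inner + complete_space

text \<open>A (possibly unbounded) operator is represented by its graph, a subset of H \<times> H.\<close>

definition is_op :: "('a::complex_vector \<times> 'a) set \<Rightarrow> bool" where
  "is_op G \<longleftrightarrow> (0, 0) \<in> G
     \<and> (\<forall>x y u v. (x, y) \<in> G \<longrightarrow> (u, v) \<in> G \<longrightarrow> (x + u, y + v) \<in> G)
     \<and> (\<forall>c x y. (x, y) \<in> G \<longrightarrow> (scaleC c x, scaleC c y) \<in> G)
     \<and> (\<forall>x y z. (x, y) \<in> G \<longrightarrow> (x, z) \<in> G \<longrightarrow> y = z)"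

definition app :: "('a \<times> 'a) set \<Rightarrow> 'a \<Rightarrow> 'a" where
  "app G x = (THE y. (x, y) \<in> G)"

definition densely_defined :: "('a::topological_space \<times> 'a) set \<Rightarrow> bool" where
  "densely_defined G \<longleftrightarrow> closure (Domain G) = UNIV"

definition adj :: "('a::complex_inner \<times> 'a) set \<Rightarrow> ('a \<times> 'a) set" where
  "adj G = {(y, z). \<forall>(x, w) \<in> G. cinner w y = cinner x z}"

definition restr :: "('a \<times> 'a) set \<Rightarrow> 'a set \<Rightarrow> ('a \<times> 'a) set" where
  "restr G D = {(x, y) \<in> G. x \<in> D}"

text \<open>Operator product A B (first B, then A) has graph  B O A;  the inverse is the converse.\<close>

definition ONB :: "(nat \<Rightarrow> 'a::complex_inner) \<Rightarrow> bool" where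
  "ONB e \<longleftrightarrow> (\<forall>n m. cinner (e n) (e m) = (if n = m then 1 else 0))
     \<and> (\<forall>x. (\<forall>n. cinner x (e n) = 0) \<longrightarrow> x = 0)"

definition cspan :: "'a::complex_vector set \<Rightarrow> 'a set" where
  "cspan S = {x. \<exists>F c. finite F \<and> F \<subseteq> S \<and> x = (\<Sum>v\<in>F. scaleC (c v) v)}"

definition csubspace :: "'a::complex_vector set \<Rightarrow> bool" where
  "csubspace S \<longleftrightarrow> 0 \<in> S \<and> (\<forall>x\<in>S. \<forall>y\<in>S. x + y \<in> S) \<and> (\<forall>c. \<forall>x\<in>S. scaleC c x \<in> S)"

definition Dseq :: "(nat \<Rightarrow> 'a::complex_inner) \<Rightarrow> 'a set" where
  "Dseq chi = {x. summable (\<lambda>n. (cmod (cinner x (chi n)))\<^sup>2)}"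

definition Dspan :: "(nat \<Rightarrow> 'a::complex_vector) \<Rightarrow> 'a set" where
  "Dspan chi = cspan (range chi)"

definition T_seq :: "(nat \<Rightarrow> 'a::complex_inner) \<Rightarrow> (nat \<Rightarrow> 'a) \<Rightarrow> ('a \<times> 'a) set" where
  "T_seq e chi = {(x, y). x \<in> Dseq chi \<and> y = (\<Sum>n. scaleC (cinner x (chi n)) (e n))}"

definition biorthogonal :: "(nat \<Rightarrow> 'a::complex_inner) \<Rightarrow> (nat \<Rightarrow> 'a) \<Rightarrow> bool" where
  "biorthogonal \<phi> \<psi> \<longleftrightarrow> (\<forall>n m. cinner (\<phi> n) (\<psi> m) = (if n = m then 1 else 0))"

definition quasi_basis :: "(nat \<Rightarrow> 'a::complex_inner) \<Rightarrow> (nat \<Rightarrow> 'a) \<Rightarrow> 'a set \<Rightarrow> bool" where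
  "quasi_basis \<phi> \<psi> D \<longleftrightarrow> biorthogonal \<phi> \<psi> \<and> csubspace D \<and> closure D = UNIV
     \<and> Dspan \<phi> \<union> Dspan \<psi> \<subseteq> D \<and> D \<subseteq> Dseq \<phi> \<inter> Dseq \<psi>
     \<and> (\<forall>x\<in>D. \<forall>y\<in>D. (\<lambda>k. cinner x (\<phi> k) * cinner (\<psi> k) y) sums cinner x y)"

definition constructing_pair :: "(nat \<Rightarrow> 'a::complex_inner) \<Rightarrow> ('a \<times> 'a) set \<Rightarrow> (nat \<Rightarrow> 'a) \<Rightarrow> bool" where
  "constructing_pair e T \<phi> \<longleftrightarrow> ONB e \<and> is_op T \<and> closed T \<and> densely_defined T
     \<and> is_op (converse T) \<and> densely_defined (converse T)
     \<and> (\<forall>n. e n \<in> Domain T \<inter> Domain (adj (converse T)) \<and> app T (e n) = \<phi> n)"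

end

theory Submission
  imports Defs
begin

text \<open>
  For x in D(T*) the adjoint relation gives <x, phi_n> = <T*x, e_n>, and for x in D(T^-1)
  it gives <x, psi_n> = <T^-1 x, e_n>. Expanding in the orthonormal basis, T_{e,phi} and
  T_{e,psi} therefore agree with T* and T^-1 on D = D(T*) \<inter> D(T^-1), and Parseval's
  identity applied to T*x and T^-1 y yields <x, y> = \<Sum>_k <x, phi_k> <psi_k, y>.
  It remains to see that D is a core for T^-1 and for T*. As T is closed, the projection
  theorem in H \<times> H makes I + T*T surjective; a vector of either graph orthogonal to all
  pairs (Tz, z), resp. (Tz, T*Tz), with Tz \<in> D(T*) is then forced to vanish.
\<close>

lemma scaleC_zero_left [simp]: "scaleC 0 x = 0"
proof -
  have "scaleC 0 x = scaleR 0 x" by (simp only: scaleR_scaleC of_real_0)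
  then show ?thesis by simp
qed

lemma scaleC_minus_left: "scaleC (- a) x = - scaleC a x"
proof -
  have "scaleC (- a) x + scaleC a x = 0" by (simp flip: scaleC_add_left)
  then show ?thesis by (simp add: eq_neg_iff_add_eq_0)
qed

lemma scaleC_minus1_left: "scaleC (-1) x = - x"
  by (simp add: scaleC_minus_left scaleC_one)

lemma cinner_zero_left [simp]: "cinner 0 y = 0"
proof -
  have "cinner 0 y + cinner 0 y = cinner 0 y + 0" by (simp flip: cinner_add_left)
  then show ?thesis by (rule add_left_imp_eq)
qed

lemma cinner_zero_right [simp]: "cinner x 0 = 0"
  by (simp add: cinner_commute[of x 0])

lemma cinner_add_right: "cinner x (y + z) = cinner x y + cinner x z"
  by (simp add: cinner_commute[of x] cinner_add_left)

lemma cinner_scaleC_right: "cinner x (scaleC r y) = cnj r * cinner x y"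
  by (simp add: cinner_commute[of x] cinner_scaleC_left)

lemma cinner_minus_left: "cinner (- x) y = - cinner x y"
  using cinner_scaleC_left[of "-1" x y] by (simp add: scaleC_minus1_left)

lemma cinner_minus_right: "cinner x (- y) = - cinner x y"
  by (simp add: cinner_commute[of x] cinner_minus_left)

lemma cinner_diff_left: "cinner (x - y) z = cinner x z - cinner y z"
  by (simp only: diff_conv_add_uminus cinner_add_left cinner_minus_left)

lemma cinner_diff_right: "cinner x (y - z) = cinner x y - cinner x z"
  by (simp only: diff_conv_add_uminus cinner_add_right cinner_minus_right)

lemma cinner_sum_left: "cinner (sum f F) y = (\<Sum>i\<in>F. cinner (f i) y)"
  by (induction F rule: infinite_finite_induct) (auto simp: cinner_add_left)

lemma cinner_sum_right: "cinner y (sum f F) = (\<Sum>i\<in>F. cinner y (f i))"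
  by (induction F rule: infinite_finite_induct) (auto simp: cinner_add_right)

lemma cinner_scaleR_left: "cinner (scaleR r x) y = of_real r * cinner x y"
  by (simp add: scaleR_scaleC cinner_scaleC_left)

lemma cinner_scaleR_right: "cinner x (scaleR r y) = of_real r * cinner x y"
  by (simp add: scaleR_scaleC cinner_scaleC_right)

lemma cinner_commute_eq: "cinner x y = cinner u v \<Longrightarrow> cinner y x = cinner v u"
  by (metis cinner_commute)

lemma power2_norm_eq_cinner: "(norm x)\<^sup>2 = Re (cinner x x)"
  using norm_eq_sqrt_cinner[of x] cinner_ge_zero[of x] by simp

lemma cinner_self_eq_norm: "cinner x x = complex_of_real ((norm x)\<^sup>2)"
  using cinner_commute[of x x] by (simp add: complex_eq_iff power2_norm_eq_cinner)

lemma power2_norm_add: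
  fixes x y :: "'a::complex_inner"
  shows "(norm (x + y))\<^sup>2 = (norm x)\<^sup>2 + (norm y)\<^sup>2 + 2 * Re (cinner x y)"
proof -
  have "cinner (x + y) (x + y) = cinner x x + cinner y y + (cinner x y + cnj (cinner x y))"
    by (simp add: cinner_add_left cinner_add_right cinner_commute[of y x])
  then show ?thesis by (simp add: power2_norm_eq_cinner)
qed

lemma power2_norm_diff:
  fixes x y :: "'a::complex_inner"
  shows "(norm (x - y))\<^sup>2 = (norm x)\<^sup>2 + (norm y)\<^sup>2 - 2 * Re (cinner x y)"
  using power2_norm_add[of x "- y"] by (simp add: cinner_minus_right)

lemma parallelogram_law:
  fixes x y :: "'a::complex_inner"
  shows "(norm (x - y))\<^sup>2 + (norm (x + y))\<^sup>2 = 2 * (norm x)\<^sup>2 + 2 * (norm y)\<^sup>2"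
  using power2_norm_add[of x y] power2_norm_diff[of x y] by linarith

lemma Re_cinner_le_norm:
  fixes x y :: "'a::complex_inner"
  shows "Re (cinner x y) \<le> norm x * norm y"
proof -
  have "(norm (x + y))\<^sup>2 \<le> (norm x + norm y)\<^sup>2"
    by (simp add: norm_triangle_ineq power_mono)
  then show ?thesis by (simp add: power2_norm_add power2_sum)
qed

lemma norm_scaleC: "norm (scaleC c (x::'a::complex_inner)) = cmod c * norm x"
proof -
  have "cinner (scaleC c x) (scaleC c x) = (c * cnj c) * cinner x x"
    by (simp add: cinner_scaleC_left cinner_scaleC_right mult.assoc)
  also have "\<dots> = complex_of_real ((cmod c)\<^sup>2 * (norm x)\<^sup>2)"
    by (simp only: complex_norm_square[symmetric] cinner_self_eq_norm of_real_mult)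
  finally have "(norm (scaleC c x))\<^sup>2 = (cmod c * norm x)\<^sup>2"
    by (simp add: power2_norm_eq_cinner power_mult_distrib)
  then show ?thesis by (simp add: power2_eq_imp_eq)
qed

lemma cinner_Cauchy_Schwarz: "cmod (cinner x y) \<le> norm x * norm y"
proof (cases "cinner x y = 0")
  case False
  define c where "c = cinner x y"
  define u where "u = cnj c / complex_of_real (cmod c)"
  have "cmod u = 1" using False by (simp add: u_def c_def norm_divide)
  have "cnj c * c = (complex_of_real (cmod c))\<^sup>2"
    using complex_norm_square[of c] by (simp add: mult.commute)
  then have "u * c = complex_of_real (cmod c)"
    using False by (simp add: u_def c_def power2_eq_square)
  then have "cmod c = Re (cinner (scaleC u x) y)"
    by (simp add: cinner_scaleC_left c_def)
  also have "\<dots> \<le> norm x * norm y"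
    using Re_cinner_le_norm[of "scaleC u x" y] \<open>cmod u = 1\<close> by (simp add: norm_scaleC)
  finally show ?thesis by (simp add: c_def)
qed simp

lemma bounded_bilinear_cinner: "bounded_bilinear cinner"
  by standard (auto simp: cinner_add_left cinner_add_right cinner_scaleR_left cinner_scaleR_right
      scaleR_conv_of_real intro!: exI[of _ 1] cinner_Cauchy_Schwarz)

lemmas bounded_linear_cinner_left = bounded_bilinear.bounded_linear_left[OF bounded_bilinear_cinner]
lemmas bounded_linear_cinner_right = bounded_bilinear.bounded_linear_right[OF bounded_bilinear_cinner]

lemma bounded_linear_scaleC: "bounded_linear (scaleC c :: 'a::complex_inner \<Rightarrow> 'a)"
proof (rule bounded_linear_intro[where K="cmod c"])
  fix x y :: 'a and r :: real
  show "scaleC c (x + y) = scaleC c x + scaleC c y" by (rule scaleC_add_right)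
  show "scaleC c (scaleR r x) = scaleR r (scaleC c x)"
    by (simp add: scaleR_scaleC scaleC_scaleC mult.commute)
  show "norm (scaleC c x) \<le> norm x * cmod c" by (simp add: norm_scaleC mult.commute)
qed

lemma orthogonal_to_dense_eq_0:
  fixes A :: "'a::complex_inner set"
  assumes "closure A = UNIV" and "\<And>x. x \<in> A \<Longrightarrow> cinner x y = 0"
  shows "y = 0"
proof -
  have "closed {x. cinner x y = 0}"
    by (intro closed_Collect_eq linear_continuous_on bounded_linear_cinner_left continuous_on_const)
  then have "closure A \<subseteq> {x. cinner x y = 0}"
    using assms(2) by (intro closure_minimal) auto
  then have "cinner y y = 0" using assms(1) by auto
  then show ?thesis by (simp add: cinner_eq_zero_iff)
qed

instance chilbert \<subseteq> banach ..

definition orthonormal_seq :: "(nat \<Rightarrow> 'a::complex_inner) \<Rightarrow> bool" where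
  "orthonormal_seq e \<longleftrightarrow> (\<forall>n m. cinner (e n) (e m) = (if n = m then 1 else 0))"

lemma ONB_imp_orthonormal_seq: "ONB e \<Longrightarrow> orthonormal_seq e"
  by (simp add: ONB_def orthonormal_seq_def)

lemma orthonormal_seq_cinner_sum:
  assumes "orthonormal_seq e" and "finite F"
  shows "cinner (\<Sum>n\<in>F. scaleC (c n) (e n)) (\<Sum>m\<in>F. scaleC (d m) (e m)) = (\<Sum>n\<in>F. c n * cnj (d n))"
proof -
  have "cinner (e n) (\<Sum>m\<in>F. scaleC (d m) (e m)) = cnj (d n)" if "n \<in> F" for n
  proof -
    have "(\<Sum>m\<in>F. cnj (d m) * cinner (e n) (e m)) = (\<Sum>m\<in>F. if n = m then cnj (d m) else 0)"
      using assms(1) by (intro sum.cong) (auto simp: orthonormal_seq_def)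
    then show ?thesis using assms(2) that by (simp add: cinner_sum_right cinner_scaleC_right)
  qed
  then show ?thesis by (simp add: cinner_sum_left cinner_scaleC_left)
qed

lemma orthonormal_seq_norm_sum:
  assumes "orthonormal_seq e" and "finite F"
  shows "(norm (\<Sum>n\<in>F. scaleC (c n) (e n)))\<^sup>2 = (\<Sum>n\<in>F. (cmod (c n))\<^sup>2)"
  by (simp add: power2_norm_eq_cinner orthonormal_seq_cinner_sum[OF assms] complex_mult_cnj
      Re_sum cmod_power2)

lemma Bessel_inequality_partial:
  assumes "orthonormal_seq e"
  shows "(\<Sum>n<N. (cmod (cinner a (e n)))\<^sup>2) \<le> (norm a)\<^sup>2"
proof -
  define c where "c n = cinner a (e n)" for n
  define s where "s = (\<Sum>n<N. scaleC (c n) (e n))"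
  define Q where "Q = (\<Sum>n<N. (cmod (c n))\<^sup>2)"
  have ss: "cinner s s = complex_of_real Q"
    unfolding s_def Q_def
    by (simp add: orthonormal_seq_cinner_sum[OF assms] complex_norm_square del: of_real_power)
  have as: "cinner a s = complex_of_real Q"
    unfolding s_def Q_def
    by (simp add: cinner_sum_right cinner_scaleC_right c_def[symmetric] complex_norm_square
        mult.commute del: of_real_power)
  then have sa: "cinner s a = complex_of_real Q"
    by (metis cinner_commute complex_cnj_complex_of_real)
  have "cinner (a - s) (a - s) = cinner a a - complex_of_real Q"
    by (simp add: cinner_diff_left cinner_diff_right ss as sa)
  then have "0 \<le> Re (cinner a a) - Q" using cinner_ge_zero[of "a - s"] by simp
  then show ?thesis by (simp add: power2_norm_eq_cinner Q_def c_def)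
qed

lemma summable_Bessel:
  "orthonormal_seq e \<Longrightarrow> summable (\<lambda>n. (cmod (cinner a (e n)))\<^sup>2)"
  by (rule summableI_nonneg_bounded[where x="(norm a)\<^sup>2"]) (auto intro: Bessel_inequality_partial)

lemma summable_Fourier_series:
  fixes e :: "nat \<Rightarrow> 'a::chilbert"
  assumes on: "orthonormal_seq e"
  shows "summable (\<lambda>n. scaleC (cinner a (e n)) (e n))"
  unfolding summable_Cauchy
proof (intro allI impI)
  fix r :: real assume r: "r > 0"
  obtain N where N: "\<forall>m\<ge>N. \<forall>n. norm (\<Sum>k=m..<n. (cmod (cinner a (e k)))\<^sup>2) < r\<^sup>2"
    using summable_Bessel[OF on, of a] r unfolding summable_Cauchy by (meson zero_less_power)
  have "norm (\<Sum>k=m..<n. scaleC (cinner a (e k)) (e k)) < r" if "m \<ge> N" for m n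
  proof -
    have "(norm (\<Sum>k=m..<n. scaleC (cinner a (e k)) (e k)))\<^sup>2 = (\<Sum>k=m..<n. (cmod (cinner a (e k)))\<^sup>2)"
      by (simp add: orthonormal_seq_norm_sum[OF on])
    also have "\<dots> < r\<^sup>2" using N that by (simp add: sum_nonneg)
    finally show ?thesis using r by (meson power_less_imp_less_base less_le)
  qed
  then show "\<exists>N. \<forall>m\<ge>N. \<forall>n. norm (\<Sum>k=m..<n. scaleC (cinner a (e k)) (e k)) < r" by blast
qed

lemma orthonormal_seq_sums_coefficient:
  fixes e :: "nat \<Rightarrow> 'a::chilbert"
  assumes "orthonormal_seq e" and "(\<lambda>n. scaleC (c n) (e n)) sums s"
  shows "cinner s (e m) = c m"
proof -
  have "(\<lambda>n. cinner (scaleC (c n) (e n)) (e m)) sums cinner s (e m)"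
    by (rule bounded_linear.sums[OF bounded_linear_cinner_left assms(2)])
  moreover have "(\<lambda>n. cinner (scaleC (c n) (e n)) (e m)) = (\<lambda>n. if n = m then c n else 0)"
    using assms(1) by (auto simp: orthonormal_seq_def cinner_scaleC_left)
  ultimately show ?thesis using sums_single[of m c] sums_unique2 by metis
qed

lemma ONB_Fourier_sums:
  fixes e :: "nat \<Rightarrow> 'a::chilbert"
  assumes onb: "ONB e"
  shows "(\<lambda>n. scaleC (cinner a (e n)) (e n)) sums a"
proof -
  have on: "orthonormal_seq e" using onb by (rule ONB_imp_orthonormal_seq)
  define s where "s = (\<Sum>n. scaleC (cinner a (e n)) (e n))"
  have sums: "(\<lambda>n. scaleC (cinner a (e n)) (e n)) sums s"
    unfolding s_def using summable_Fourier_series[OF on] by (rule summable_sums)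
  have "\<forall>m. cinner (a - s) (e m) = 0"
    using orthonormal_seq_sums_coefficient[OF on sums] by (simp add: cinner_diff_left)
  with onb have "a - s = 0" unfolding ONB_def by blast
  then show ?thesis using sums by simp
qed

lemma ONB_Parseval:
  fixes e :: "nat \<Rightarrow> 'a::chilbert"
  assumes "ONB e"
  shows "(\<lambda>n. cinner a (e n) * cinner (e n) b) sums cinner a b"
  using bounded_linear.sums[OF bounded_linear_cinner_left ONB_Fourier_sums[OF assms, of a], of b]
  by (simp add: cinner_scaleC_left)

instantiation prod :: (complex_vector, complex_vector) complex_vector
begin
definition scaleC_prod_def: "scaleC c x = (scaleC c (fst x), scaleC c (snd x))"
instance
  by standard (simp_all add: scaleC_prod_def prod_eq_iff scaleC_add_right scaleC_add_left
      scaleC_scaleC scaleC_one scaleR_scaleC)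
end

lemma scaleC_Pair [simp]: "scaleC c (a, b) = (scaleC c a, scaleC c b)"
  by (simp add: scaleC_prod_def)

instantiation prod :: (complex_inner, complex_inner) complex_inner
begin
definition cinner_prod_def: "cinner x y = cinner (fst x) (fst y) + cinner (snd x) (snd y)"
instance
proof
  fix x y z :: "'a \<times> 'b" and r :: complex
  show "cinner x y = cnj (cinner y x)"
    by (simp add: cinner_prod_def cinner_commute[of "fst x"] cinner_commute[of "snd x"])
  show "cinner (x + y) z = cinner x z + cinner y z"
    by (simp add: cinner_prod_def cinner_add_left)
  show "cinner (scaleC r x) y = r * cinner x y"
    by (simp add: cinner_prod_def scaleC_prod_def cinner_scaleC_left distrib_left)
  show "0 \<le> Re (cinner x x)"
    by (simp add: cinner_prod_def cinner_ge_zero)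
  show "norm x = sqrt (Re (cinner x x))"
    by (simp add: norm_prod_def cinner_prod_def power2_norm_eq_cinner)
  show "cinner x x = 0 \<longleftrightarrow> x = 0"
  proof
    assume "cinner x x = 0"
    then have "Re (cinner x x) = 0" by simp
    then have "(norm (fst x))\<^sup>2 + (norm (snd x))\<^sup>2 = 0"
      by (simp add: cinner_prod_def power2_norm_eq_cinner)
    then show "x = 0" by (simp add: add_nonneg_eq_0_iff prod_eq_iff)
  qed (simp add: cinner_prod_def)
qed
end

instance prod :: (chilbert, chilbert) chilbert ..

lemma cinner_Pair: "cinner (a, b) (c, d) = cinner a c + cinner b d"
  by (simp add: cinner_prod_def)

section \<open>Subspaces and the projection theorem\<close>

lemma csubspaceI:
  assumes "0 \<in> M" "\<And>x y. x \<in> M \<Longrightarrow> y \<in> M \<Longrightarrow> x + y \<in> M" "\<And>c x. x \<in> M \<Longrightarrow> scaleC c x \<in> M"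
  shows "csubspace M"
  using assms by (simp add: csubspace_def)

lemma csubspace_add_Pair: "csubspace G \<Longrightarrow> (a, b) \<in> G \<Longrightarrow> (c, d) \<in> G \<Longrightarrow> (a + c, b + d) \<in> G"
  unfolding csubspace_def by (metis add_Pair)

lemma csubspace_scaleC_Pair: "csubspace G \<Longrightarrow> (a, b) \<in> G \<Longrightarrow> (scaleC c a, scaleC c b) \<in> G"
  unfolding csubspace_def by (metis scaleC_Pair)

lemma csubspace_zero_Pair: "csubspace G \<Longrightarrow> (0, 0) \<in> G"
  unfolding csubspace_def by (simp add: zero_prod_def)

lemma csubspace_diff: "csubspace M \<Longrightarrow> x \<in> M \<Longrightarrow> y \<in> M \<Longrightarrow> x - y \<in> M"
  unfolding csubspace_def by (metis diff_conv_add_uminus scaleC_minus1_left)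

lemma csubspace_scaleR: "csubspace M \<Longrightarrow> x \<in> M \<Longrightarrow> scaleR r x \<in> M"
  unfolding csubspace_def by (simp add: scaleR_scaleC)

lemma csubspace_Int: "csubspace A \<Longrightarrow> csubspace B \<Longrightarrow> csubspace (A \<inter> B)"
  by (simp add: csubspace_def)

lemma cspan_subset: "csubspace D \<Longrightarrow> S \<subseteq> D \<Longrightarrow> cspan S \<subseteq> D"
proof
  fix x assume D: "csubspace D" and "S \<subseteq> D" and "x \<in> cspan S"
  then obtain F c where "finite F" "F \<subseteq> D" and x: "x = (\<Sum>v\<in>F. scaleC (c v) v)"
    by (auto simp: cspan_def)
  then show "x \<in> D" unfolding x
    by (induction F rule: finite_induct) (use D in \<open>auto simp: csubspace_def\<close>)
qed

lemma csubspace_closure: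
  fixes M :: "'a::complex_inner set"
  assumes M: "csubspace M"
  shows "csubspace (closure M)"
proof -
  have "(\<lambda>z. fst z + snd z) ` closure (M \<times> M) \<subseteq> closure M"
    using M by (intro image_closure_subset continuous_intros)
      (auto simp: csubspace_def intro!: closure_subset[THEN subsetD])
  then have "\<forall>x\<in>closure M. \<forall>y\<in>closure M. x + y \<in> closure M"
    unfolding closure_Times by force
  moreover have "scaleC c ` closure M \<subseteq> closure M" for c
    using M by (intro image_closure_subset linear_continuous_on bounded_linear_scaleC)
      (auto simp: csubspace_def intro!: closure_subset[THEN subsetD])
  moreover have "0 \<in> closure M" using M closure_subset by (auto simp: csubspace_def)
  ultimately show ?thesis unfolding csubspace_def by blast
qed

lemma midpoint_bound_in_csubspace:
  fixes M :: "'a::complex_inner set"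
  assumes M: "csubspace M" and "a \<in> M" "b \<in> M" and d: "\<And>g. g \<in> M \<Longrightarrow> d \<le> norm (p - g)" "0 \<le> d"
  shows "(norm (a - b))\<^sup>2 \<le> 2 * ((norm (p - a))\<^sup>2 - d\<^sup>2) + 2 * ((norm (p - b))\<^sup>2 - d\<^sup>2)"
proof -
  define mid where "mid = scaleR (1/2) (a + b)"
  have "mid \<in> M" unfolding mid_def using M assms(2,3) by (intro csubspace_scaleR) (auto simp: csubspace_def)
  then have "d\<^sup>2 \<le> (norm (p - mid))\<^sup>2"
    using d by (simp add: power_mono)
  then have "4 * d\<^sup>2 \<le> (norm (scaleR 2 (p - mid)))\<^sup>2"
    by (simp add: power_mult_distrib)
  also have "scaleR 2 (p - mid) = (p - b) + (p - a)"
    by (simp add: mid_def algebra_simps scaleR_2)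
  finally show ?thesis
    using parallelogram_law[of "p - b" "p - a"] by simp
qed

lemma minimizing_sequence_Cauchy:
  fixes M :: "'a::complex_inner set"
  assumes M: "csubspace M" and mM: "\<And>k. m k \<in> M"
    and dle: "\<And>g. g \<in> M \<Longrightarrow> d \<le> norm (p - g)" and d0: "0 \<le> d"
    and md: "\<And>k. (norm (p - m k))\<^sup>2 < d\<^sup>2 + inverse (Suc k)"
  shows "Cauchy m"
proof (rule metric_CauchyI)
  fix r :: real assume r: "r > 0"
  obtain N :: nat where N: "inverse (Suc N) < r\<^sup>2 / 4"
    using reals_Archimedean[of "r\<^sup>2 / 4"] r by auto
  have "dist (m j) (m k) < r" if "j \<ge> N" "k \<ge> N" for j k
  proof -
    have "inverse (Suc j) \<le> inverse (Suc N)" "inverse (Suc k) \<le> inverse (Suc N)"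
      using that by (simp_all add: le_imp_inverse_le)
    moreover have "(norm (m j - m k))\<^sup>2
        \<le> 2 * ((norm (p - m j))\<^sup>2 - d\<^sup>2) + 2 * ((norm (p - m k))\<^sup>2 - d\<^sup>2)"
      using dle d0 by (intro midpoint_bound_in_csubspace[OF M mM mM])
    ultimately have "(norm (m j - m k))\<^sup>2 < r\<^sup>2"
      using md[of j] md[of k] N by argo
    then show ?thesis using r by (simp add: dist_norm power_less_imp_less_base)
  qed
  then show "\<exists>N. \<forall>j\<ge>N. \<forall>k\<ge>N. dist (m j) (m k) < r" by blast
qed

lemma closest_point_in_csubspace:
  fixes M :: "'a::chilbert set"
  assumes cl: "closed M" and M: "csubspace M"
  shows "\<exists>m\<in>M. \<forall>g\<in>M. norm (p - m) \<le> norm (p - g)"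
proof -
  have ne: "M \<noteq> {}" using M by (auto simp: csubspace_def)
  define d where "d = infdist p M"
  have d0: "d \<ge> 0" by (simp add: d_def infdist_nonneg)
  have dle: "d \<le> norm (p - g)" if "g \<in> M" for g
    using infdist_le[OF that, of p] by (simp add: d_def dist_norm)
  have "\<exists>m\<in>M. (norm (p - m))\<^sup>2 < d\<^sup>2 + inverse (Suc k)" for k
  proof -
    have "d < sqrt (d\<^sup>2 + inverse (Suc k))"
      using d0 real_sqrt_less_mono[of "d\<^sup>2" "d\<^sup>2 + inverse (Suc k)"] by simp
    moreover have "bdd_below ((\<lambda>a. dist p a) ` M)" by (rule bdd_belowI[of _ 0]) auto
    ultimately obtain m where "m \<in> M" "norm (p - m) < sqrt (d\<^sup>2 + inverse (Suc k))"
      using ne by (auto simp: d_def infdist_notempty cINF_less_iff dist_norm)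
    moreover have "(norm (p - m))\<^sup>2 < (sqrt (d\<^sup>2 + inverse (Suc k)))\<^sup>2"
      using calculation by (intro power_strict_mono) simp_all
    ultimately show ?thesis by auto
  qed
  then obtain m where mM: "\<And>k. m k \<in> M"
    and md: "\<And>k. (norm (p - m k))\<^sup>2 < d\<^sup>2 + inverse (Suc k)"
    by metis
  have "Cauchy m" using M mM dle d0 md by (rule minimizing_sequence_Cauchy)
  then obtain L where L: "m \<longlonglongrightarrow> L" using Cauchy_convergent_iff convergent_def by blast
  have "L \<in> M" using closed_sequentially[OF cl mM L] .
  moreover have "(norm (p - L))\<^sup>2 \<le> d\<^sup>2"
  proof (rule LIMSEQ_le)
    show "(\<lambda>k. (norm (p - m k))\<^sup>2) \<longlonglongrightarrow> (norm (p - L))\<^sup>2" by (intro tendsto_intros L)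
    show "(\<lambda>k. d\<^sup>2 + inverse (Suc k)) \<longlonglongrightarrow> d\<^sup>2"
      using tendsto_add[OF tendsto_const LIMSEQ_inverse_real_of_nat, of "d\<^sup>2"] by simp
    show "\<exists>N. \<forall>k\<ge>N. (norm (p - m k))\<^sup>2 \<le> d\<^sup>2 + inverse (Suc k)"
      using md less_imp_le by blast
  qed
  then have "norm (p - L) \<le> norm (p - g)" if "g \<in> M" for g
    using dle[OF that] d0 by (meson norm_ge_zero order_trans power2_le_imp_le power_mono)
  ultimately show ?thesis by blast
qed

lemma quadratic_nonneg_imp_linear_coeff_0:
  fixes a b :: real
  assumes "b \<ge> 0" and "\<And>t. 0 \<le> t\<^sup>2 * b - 2 * t * a"
  shows "a = 0"
proof -
  define t where "t = a / (b + 2)"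
  have "t * (b + 2) = a" using assms(1) by (simp add: t_def)
  then have "0 \<le> t\<^sup>2 * b - 2 * t * (t * (b + 2))"
    using assms(2)[of t] by simp
  also have "\<dots> = - (t\<^sup>2 * (b + 4))" by (simp add: algebra_simps power2_eq_square)
  finally have "t\<^sup>2 * (b + 4) \<le> 0" by simp
  moreover have "0 \<le> t\<^sup>2 * (b + 4)" using assms(1) by simp
  ultimately have "t\<^sup>2 * (b + 4) = 0" by linarith
  then have "t = 0" using assms(1) by simp
  then show "a = 0" using assms(1) by (simp add: t_def)
qed

lemma closest_point_orthogonal:
  assumes M: "csubspace M" and "m \<in> M" and min: "\<And>g. g \<in> M \<Longrightarrow> norm (p - m) \<le> norm (p - g)"
    and "g \<in> M"
  shows "cinner (p - m) g = 0"
proof -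
  have Re0: "Re (cinner (p - m) g) = 0" if "g \<in> M" for g
  proof (rule quadratic_nonneg_imp_linear_coeff_0[of "(norm g)\<^sup>2"])
    fix t :: real
    have "m + scaleR t g \<in> M"
      using M \<open>m \<in> M\<close> csubspace_scaleR[OF M that] by (simp add: csubspace_def)
    then have "(norm (p - m))\<^sup>2 \<le> (norm ((p - m) - scaleR t g))\<^sup>2"
      using min by (simp add: diff_diff_eq power_mono)
    then show "0 \<le> t\<^sup>2 * (norm g)\<^sup>2 - 2 * t * Re (cinner (p - m) g)"
      by (simp add: power2_norm_diff cinner_scaleR_right power_mult_distrib)
  qed simp
  have "scaleC \<i> g \<in> M" using M \<open>g \<in> M\<close> by (simp add: csubspace_def)
  then have "Im (cinner (p - m) g) = 0"
    using Re0 by (fastforce simp: cinner_scaleC_right)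
  then show ?thesis using Re0[OF \<open>g \<in> M\<close>] by (simp add: complex_eq_iff)
qed

lemma orthogonal_projection_exists:
  fixes M :: "'a::chilbert set"
  assumes "closed M" and "csubspace M"
  shows "\<exists>m\<in>M. \<forall>g\<in>M. cinner (p - m) g = 0"
  using closest_point_in_csubspace[OF assms] closest_point_orthogonal[OF assms(2)] by metis

lemma closure_eq_if_orthogonal_trivial:
  fixes G N :: "'a::chilbert set"
  assumes "closed G" "csubspace G" "csubspace N" "N \<subseteq> G"
    and orth: "\<And>q. q \<in> G \<Longrightarrow> (\<And>n. n \<in> N \<Longrightarrow> cinner q n = 0) \<Longrightarrow> q = 0"
  shows "closure N = G"
proof
  show closure_sub: "closure N \<subseteq> G" using assms by (intro closure_minimal)
  show "G \<subseteq> closure N"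
  proof
    fix p assume "p \<in> G"
    obtain m where m: "m \<in> closure N" and mo: "\<And>g. g \<in> closure N \<Longrightarrow> cinner (p - m) g = 0"
      using orthogonal_projection_exists[OF closed_closure csubspace_closure[OF assms(3)], of p]
      by blast
    have "p - m = 0"
      using mo closure_subset csubspace_diff[OF assms(2) \<open>p \<in> G\<close>] m closure_sub
      by (intro orth) auto
    then show "p \<in> closure N" using m by simp
  qed
qed

lemma is_op_csubspace: "is_op G \<Longrightarrow> csubspace G"
  unfolding is_op_def csubspace_def by (auto simp: zero_prod_def)

lemma is_op_single_valued: "is_op G \<Longrightarrow> (x, y) \<in> G \<Longrightarrow> (x, z) \<in> G \<Longrightarrow> y = z"
  unfolding is_op_def by blast

lemma app_eqI:
  assumes "\<And>z1 z2. (x, z1) \<in> G \<Longrightarrow> (x, z2) \<in> G \<Longrightarrow> z1 = z2" and "(x, y) \<in> G"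
  shows "app G x = y"
  unfolding app_def using assms by (intro the_equality) auto

lemma csubspace_converse: "csubspace G \<Longrightarrow> csubspace (converse G)"
  by (rule csubspaceI) (auto simp: zero_prod_def csubspace_zero_Pair csubspace_add_Pair csubspace_scaleC_Pair)

lemma csubspace_Domain:
  assumes "csubspace (G :: ('a::complex_vector \<times> 'a) set)"
  shows "csubspace (Domain G)"
  by (rule csubspaceI) (auto intro: csubspace_zero_Pair csubspace_add_Pair csubspace_scaleC_Pair assms)

lemma csubspace_restr: "csubspace G \<Longrightarrow> csubspace D \<Longrightarrow> csubspace (restr G D)"
  by (rule csubspaceI)
    (auto simp: restr_def zero_prod_def csubspace_zero_Pair csubspace_add_Pair csubspace_scaleC_Pair,
      auto simp: csubspace_def)

lemma restr_subset: "restr G D \<subseteq> G"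
  by (auto simp: restr_def)

lemma Domain_subset_closure_if_core:
  assumes "closure (restr G D) = G"
  shows "Domain G \<subseteq> closure D"
proof -
  have "fst ` closure (restr G D) \<subseteq> closure D"
    using closure_subset by (intro image_closure_subset continuous_intros) (force simp: restr_def)+
  then show ?thesis using assms by (force simp: Domain_fst)
qed

lemma adj_iff: "(y, z) \<in> adj G \<longleftrightarrow> (\<forall>x w. (x, w) \<in> G \<longrightarrow> cinner w y = cinner x z)"
  unfolding adj_def by (simp add: Ball_def split_paired_All)

lemma adj_cinner: "(x, w) \<in> G \<Longrightarrow> (y, z) \<in> adj G \<Longrightarrow> cinner y w = cinner z x"
  by (auto simp: adj_iff intro: cinner_commute_eq)

lemma adj_converse: "adj (converse G) = converse (adj G)"
  by (auto simp: adj_iff)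

lemma csubspace_adj: "csubspace (adj G)"
  by (rule csubspaceI) (auto simp: adj_iff zero_prod_def cinner_add_right cinner_scaleC_right)

lemma closed_adj: "closed (adj (G :: ('a::complex_inner \<times> 'a) set))"
proof -
  have "adj G = (\<Inter>q\<in>G. {p. cinner (snd q) (fst p) = cinner (fst q) (snd p)})"
    by (auto simp: adj_iff) (drule (1) bspec, simp)
  then show ?thesis
    by (simp add: closed_INT closed_Collect_eq linear_continuous_on bounded_linear_compose
        bounded_linear_cinner_right bounded_linear_fst bounded_linear_snd)
qed

lemma app_adj:
  fixes G :: "('a::complex_inner \<times> 'a) set"
  assumes dense: "closure (Domain G) = UNIV" and "(y, z) \<in> adj G"
  shows "app (adj G) y = z"
proof (rule app_eqI[OF _ assms(2)])
  fix z1 z2 assume "(y, z1) \<in> adj G" "(y, z2) \<in> adj G"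
  then have "z1 - z2 = 0"
    by (intro orthogonal_to_dense_eq_0[OF dense]) (auto simp: adj_iff cinner_diff_right)
  then show "z1 = z2" by simp
qed

lemma closed_converse:
  fixes G :: "('a::topological_space \<times> 'b::topological_space) set"
  assumes "closed G"
  shows "closed (converse G)"
proof -
  have "converse G = (\<lambda>p. (snd p, fst p)) -` G" by auto
  then show ?thesis using assms by (simp add: continuous_closed_vimage continuous_intros)
qed

section \<open>Cores of the inverse and the adjoint\<close>

text \<open>The pair (z, w) represents w = Tz with h = z + T*Tz: the operator I + T*T is onto.\<close>
lemma id_plus_adj_comp_surj:
  fixes T :: "('a::chilbert \<times> 'a) set"
  assumes "csubspace T" and "closed T"
  shows "\<exists>z w. (z, w) \<in> T \<and> (w, h - z) \<in> adj T"
proof -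
  obtain z w where zw: "(z, w) \<in> T" and orth: "\<And>g. g \<in> T \<Longrightarrow> cinner ((h, 0) - (z, w)) g = 0"
    using orthogonal_projection_exists[OF assms(2,1), of "(h, 0)"] by auto
  have "(w, h - z) \<in> adj T"
    unfolding adj_iff
  proof (intro allI impI)
    fix x y assume "(x, y) \<in> T"
    then have "cinner (h - z) x = cinner w y"
      using orth[of "(x, y)"] by (simp add: cinner_Pair cinner_minus_left)
    then show "cinner y w = cinner x (h - z)" by (rule cinner_commute_eq[symmetric])
  qed
  then show ?thesis using zw by blast
qed

lemma closure_restr_converse_core:
  fixes T :: "('a::chilbert \<times> 'a) set"
  assumes op: "is_op T" and cl: "closed T"
  shows "closure (restr (converse T) (Domain (adj T) \<inter> Domain (converse T))) = converse T"
proof (rule closure_eq_if_orthogonal_trivial)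
  show "closed (converse T)" using cl by (rule closed_converse)
  show "csubspace (converse T)" using is_op_csubspace[OF op] by (rule csubspace_converse)
  then show "csubspace (restr (converse T) (Domain (adj T) \<inter> Domain (converse T)))"
    by (intro csubspace_restr csubspace_Int csubspace_Domain csubspace_adj)
  show "restr (converse T) (Domain (adj T) \<inter> Domain (converse T)) \<subseteq> converse T"
    by (rule restr_subset)
next
  fix q assume "q \<in> converse T"
    and orth: "\<And>n. n \<in> restr (converse T) (Domain (adj T) \<inter> Domain (converse T)) \<Longrightarrow> cinner q n = 0"
  then obtain a b where q: "q = (a, b)" and ba: "(b, a) \<in> T" by auto
  obtain z w where zw: "(z, w) \<in> T" and w: "(w, b - z) \<in> adj T"
    using id_plus_adj_comp_surj[OF is_op_csubspace[OF op] cl] by blast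
  have "cinner a w + cinner b z = 0"
    using orth[of "(w, z)"] zw w q by (auto simp: restr_def cinner_Pair)
  moreover have "cinner a w = cinner b (b - z)" using w ba by (auto simp: adj_iff)
  ultimately have "b = 0" by (simp add: cinner_diff_right cinner_eq_zero_iff)
  moreover have "(0, 0) \<in> T" using op by (simp add: is_op_def)
  ultimately show "q = 0" using is_op_single_valued[OF op] ba q by (auto simp: zero_prod_def)
qed

lemma closure_restr_adj_core:
  fixes T :: "('a::chilbert \<times> 'a) set"
  assumes sub: "csubspace T" and cl: "closed T" and dense: "closure (Range T) = UNIV"
  shows "closure (restr (adj T) (Domain (adj T) \<inter> Domain (converse T))) = adj T"
proof (rule closure_eq_if_orthogonal_trivial)
  show "closed (adj T)" by (rule closed_adj)
  show "csubspace (adj T)" by (rule csubspace_adj)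
  show "csubspace (restr (adj T) (Domain (adj T) \<inter> Domain (converse T)))"
    by (intro csubspace_restr csubspace_Int csubspace_Domain csubspace_adj csubspace_converse sub)
  show "restr (adj T) (Domain (adj T) \<inter> Domain (converse T)) \<subseteq> adj T"
    by (rule restr_subset)
next
  fix q assume "q \<in> adj T"
    and orth: "\<And>n. n \<in> restr (adj T) (Domain (adj T) \<inter> Domain (converse T)) \<Longrightarrow> cinner q n = 0"
  then obtain y t where q: "q = (y, t)" and yt: "(y, t) \<in> adj T" by (cases q) auto
  obtain z w where zw: "(z, w) \<in> T" and w: "(w, t - z) \<in> adj T"
    using id_plus_adj_comp_surj[OF sub cl] by blast
  have "cinner y w + cinner t (t - z) = 0"
    using orth[of "(w, t - z)"] zw w q by (auto simp: restr_def cinner_Pair)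
  moreover have "cinner y w = cinner t z" using adj_cinner[OF zw yt] .
  ultimately have t0: "t = 0" by (simp add: cinner_diff_right cinner_eq_zero_iff)
  have "y = 0"
    using yt t0 by (intro orthogonal_to_dense_eq_0[OF dense]) (auto simp: adj_iff)
  then show "q = 0" using q t0 by (simp add: zero_prod_def)
qed

lemma T_seq_memI:
  fixes e :: "nat \<Rightarrow> 'a::chilbert"
  assumes "ONB e" and coef: "\<And>n. cinner x (chi n) = cinner y (e n)"
  shows "(x, y) \<in> T_seq e chi"
  using summable_Bessel[OF ONB_imp_orthonormal_seq[OF assms(1)], of y] ONB_Fourier_sums[OF assms(1), of y]
  by (simp add: T_seq_def Dseq_def coef sums_iff)

lemma restr_T_seq_eq:
  fixes e :: "nat \<Rightarrow> 'a::chilbert"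
  assumes "ONB e" and "D \<subseteq> Domain A"
    and coef: "\<And>x y n. x \<in> D \<Longrightarrow> (x, y) \<in> A \<Longrightarrow> cinner x (chi n) = cinner y (e n)"
  shows "restr (T_seq e chi) D = restr A D"
proof (intro set_eqI iffI)
  fix p assume "p \<in> restr A D"
  then show "p \<in> restr (T_seq e chi) D"
    using T_seq_memI[OF assms(1) coef] by (auto simp: restr_def)
next
  fix p assume "p \<in> restr (T_seq e chi) D"
  then obtain x y where p: "p = (x, y)" "x \<in> D" and xy: "(x, y) \<in> T_seq e chi"
    by (auto simp: restr_def)
  obtain y' where xy': "(x, y') \<in> A" using assms(2) \<open>x \<in> D\<close> by auto
  then have "(x, y') \<in> T_seq e chi" using T_seq_memI[OF assms(1) coef] \<open>x \<in> D\<close> by blast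
  then have "y = y'" using xy by (simp add: T_seq_def)
  then show "p \<in> restr A D" using p xy' by (simp add: restr_def)
qed

locale generalized_riesz_system =
  fixes e \<phi> :: "nat \<Rightarrow> 'h::chilbert" and T :: "('h \<times> 'h) set"
  assumes constructing_pair: "constructing_pair e T \<phi>"
begin

abbreviation \<psi> :: "nat \<Rightarrow> 'h" where
  "\<psi> n \<equiv> app (adj (converse T)) (e n)"

abbreviation \<D> :: "'h set" where
  "\<D> \<equiv> Domain (adj T) \<inter> Domain (converse T)"

lemma ONB_e: "ONB e"
  and is_op_T: "is_op T"
  and closed_T: "closed T"
  and dense_Range_T: "closure (Range T) = UNIV"
  using constructing_pair by (auto simp: constructing_pair_def densely_defined_def)

lemma graph_e_\<phi>: "(e n, \<phi> n) \<in> T"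
proof -
  from constructing_pair obtain y where "(e n, y) \<in> T" "app T (e n) = \<phi> n"
    by (auto simp: constructing_pair_def)
  moreover have "app T (e n) = y"
    using is_op_single_valued[OF is_op_T] \<open>(e n, y) \<in> T\<close> by (intro app_eqI) auto
  ultimately show ?thesis by simp
qed

lemma adj_\<psi>_e: "(\<psi> n, e n) \<in> adj T"
proof -
  from constructing_pair obtain y where "(e n, y) \<in> adj (converse T)"
    by (auto simp: constructing_pair_def)
  moreover from this have "app (adj (converse T)) (e n) = y"
    using dense_Range_T by (intro app_adj) simp_all
  ultimately show ?thesis by (simp add: adj_converse)
qed

lemma cinner_\<phi>: "(x, t) \<in> adj T \<Longrightarrow> cinner x (\<phi> n) = cinner t (e n)"
  using adj_cinner[OF graph_e_\<phi>] .

lemma cinner_\<psi>: "(s, x) \<in> T \<Longrightarrow> cinner x (\<psi> n) = cinner s (e n)"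
  using adj_\<psi>_e by (auto simp: adj_iff)

lemma biorthogonal: "biorthogonal \<phi> \<psi>"
  using ONB_e by (simp add: biorthogonal_def cinner_\<psi>[OF graph_e_\<phi>] ONB_def)

lemma restr_T_seq_\<phi>: "restr (T_seq e \<phi>) \<D> = restr (adj T) \<D>"
  by (rule restr_T_seq_eq[OF ONB_e]) (auto simp: cinner_\<phi>)

lemma restr_T_seq_\<psi>: "restr (T_seq e \<psi>) \<D> = restr (converse T) \<D>"
  by (rule restr_T_seq_eq[OF ONB_e]) (auto simp: cinner_\<psi>)

lemma core_subset_Dseq: "\<D> \<subseteq> Dseq \<phi> \<inter> Dseq \<psi>"
proof
  fix x assume "x \<in> \<D>"
  then obtain t s where "(x, t) \<in> adj T" "(s, x) \<in> T" by auto
  then have "(x, t) \<in> T_seq e \<phi>" "(x, s) \<in> T_seq e \<psi>"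
    by (auto intro!: T_seq_memI[OF ONB_e] simp: cinner_\<phi> cinner_\<psi>)
  then show "x \<in> Dseq \<phi> \<inter> Dseq \<psi>" by (simp add: T_seq_def)
qed

lemma csubspace_core: "csubspace \<D>"
  using is_op_csubspace[OF is_op_T]
  by (intro csubspace_Int csubspace_Domain csubspace_adj csubspace_converse)

lemma dense_core: "closure \<D> = UNIV"
proof -
  have "Range T \<subseteq> closure \<D>"
    using Domain_subset_closure_if_core[OF closure_restr_converse_core[OF is_op_T closed_T]] by simp
  then have "closure (Range T) \<subseteq> closure \<D>"
    by (metis closure_closure closure_mono)
  then show ?thesis using dense_Range_T by auto
qed

text \<open>Both sides equal <T*x, T^-1 y>, the right one by Parseval.\<close>
lemma quasi_basis_sums:
  assumes "x \<in> \<D>" and "y \<in> \<D>"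
  shows "(\<lambda>k. cinner x (\<phi> k) * cinner (\<psi> k) y) sums cinner x y"
proof -
  obtain t s where xt: "(x, t) \<in> adj T" and sy: "(s, y) \<in> T" using assms by auto
  have "(\<lambda>k. cinner x (\<phi> k) * cinner (\<psi> k) y) = (\<lambda>k. cinner t (e k) * cinner (e k) s)"
    using cinner_\<phi>[OF xt] cinner_\<psi>[OF sy] by (metis cinner_commute_eq)
  moreover have "cinner t s = cinner x y" using adj_cinner[OF sy xt] by simp
  ultimately show ?thesis using ONB_Parseval[OF ONB_e, of t s] by simp
qed

lemma \<phi>_in_core:
  assumes "e n \<in> Domain (T O adj T)"
  shows "\<phi> n \<in> \<D>"
proof -
  from assms obtain y z where "(e n, y) \<in> T" "(y, z) \<in> adj T" by auto
  then show ?thesis using graph_e_\<phi>[of n] is_op_single_valued[OF is_op_T] by auto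
qed

lemma \<psi>_in_core:
  assumes "e n \<in> Domain (adj (converse T) O converse T)"
  shows "\<psi> n \<in> \<D>"
proof -
  from assms obtain y z where y: "(e n, y) \<in> adj (converse T)" and "(y, z) \<in> converse T" by auto
  moreover have "app (adj (converse T)) (e n) = y"
    using y dense_Range_T by (intro app_adj) simp_all
  ultimately show ?thesis using adj_\<psi>_e[of n] by auto
qed

lemma quasi_basis:
  assumes "\<And>n. e n \<in> Domain (T O adj T) \<inter> Domain (adj (converse T) O converse T)"
  shows "quasi_basis \<phi> \<psi> \<D>"
proof -
  have "Dspan \<phi> \<union> Dspan \<psi> \<subseteq> \<D>"
    unfolding Dspan_def using assms \<phi>_in_core \<psi>_in_core
    by (intro Un_least cspan_subset[OF csubspace_core]) auto
  then show ?thesis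
    using biorthogonal csubspace_core dense_core core_subset_Dseq quasi_basis_sums
    by (simp add: quasi_basis_def)
qed

end

theorem proposition3p5:
  fixes e \<phi> :: "nat \<Rightarrow> 'h::chilbert" and T :: "('h \<times> 'h) set"
  assumes cp: "constructing_pair e T \<phi>"
    and dom: "\<And>n. e n \<in> Domain (T O adj T) \<inter> Domain (adj (converse T) O converse T)"
  shows "quasi_basis \<phi> (\<lambda>n. app (adj (converse T)) (e n)) (Domain (adj T) \<inter> Domain (converse T))
    \<and> T = converse (closure (restr (T_seq e (\<lambda>n. app (adj (converse T)) (e n)))
                                 (Domain (adj T) \<inter> Domain (converse T))))
    \<and> adj (converse T) = converse (closure (restr (T_seq e \<phi>)
                                 (Domain (adj T) \<inter> Domain (converse T))))"
proof -
  interpret generalized_riesz_system e \<phi> T by (rule generalized_riesz_system.intro[OF cp])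
  have "closure (restr (T_seq e \<psi>) \<D>) = converse T"
    using restr_T_seq_\<psi> closure_restr_converse_core[OF is_op_T closed_T] by simp
  moreover have "closure (restr (T_seq e \<phi>) \<D>) = adj T"
    using restr_T_seq_\<phi> closure_restr_adj_core[OF is_op_csubspace[OF is_op_T] closed_T dense_Range_T]
    by simp
  ultimately show ?thesis using quasi_basis[OF dom] by (simp add: adj_converse)
qed

end
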